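(* Let $G$ be a torsion-free acylindrically hyperbolic group and let $g\in G$ be a generalised loxodromic element. Then $g$ is chiral, i.e. there is no $n\geq1$ such that $g^n$ is conjugate to $g^{-n}$.
   Context: An action of $G$ on a metric space $X$ is acylindrical if for every $r\in\mathbb{N}$ there exist $R,N\in\mathbb{N}$ such that for all $x,y\in X$ with $d(x,y)\ge R$, the number of $g\in G$ with $\max\{d(x,gx),d(y,gy)\}\le r$ is at most $N$. $G$ is acylindrically hyperbolic if it admits a non-elementary acylindrical action on a Gromov-hyperbolic space; an element of $G$ that acts loxodromically for some such action is called a generalised loxodromic element. *)

theory Defs
  imports "HOL-Analysis.Analysis" "HOL-Algebra.Group_Action"
begin

definition gromov_product :: "('b \<Rightarrow> 'b \<Rightarrow> real) \<Rightarrow> 'b \<Rightarrow> 'b \<Rightarrow> 'b \<Rightarrow> real" where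
  "gromov_product d w x y = (d w x + d w y - d x y) / 2"

definition gromov_hyperbolic :: "'b set \<Rightarrow> ('b \<Rightarrow> 'b \<Rightarrow> real) \<Rightarrow> bool" where
  "gromov_hyperbolic X d \<longleftrightarrow> Metric_space X d \<and>
     (\<exists>\<delta>\<ge>0. \<forall>w\<in>X. \<forall>x\<in>X. \<forall>y\<in>X. \<forall>z\<in>X.
        gromov_product d w x z \<ge> min (gromov_product d w x y) (gromov_product d w y z) - \<delta>)"

definition isometric_action :: "('g, 'm) monoid_scheme \<Rightarrow> 'b set \<Rightarrow> ('b \<Rightarrow> 'b \<Rightarrow> real) \<Rightarrow> ('g \<Rightarrow> 'b \<Rightarrow> 'b) \<Rightarrow> bool" where
  "isometric_action G X d \<phi> \<longleftrightarrow> group_action G X \<phi> \<and>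
     (\<forall>g\<in>carrier G. \<forall>x\<in>X. \<forall>y\<in>X. d (\<phi> g x) (\<phi> g y) = d x y)"

definition acylindrical :: "('g, 'm) monoid_scheme \<Rightarrow> 'b set \<Rightarrow> ('b \<Rightarrow> 'b \<Rightarrow> real) \<Rightarrow> ('g \<Rightarrow> 'b \<Rightarrow> 'b) \<Rightarrow> bool" where
  "acylindrical G X d \<phi> \<longleftrightarrow>
     (\<forall>r::nat. \<exists>R N::nat. \<forall>x\<in>X. \<forall>y\<in>X. d x y \<ge> real R \<longrightarrow>
        (let S = {g \<in> carrier G. max (d x (\<phi> g x)) (d y (\<phi> g y)) \<le> real r}
         in finite S \<and> card S \<le> N))"

text \<open>Sequences converging to infinity (Gromov sequences) and their equivalence;
  equivalence classes are the points of the Gromov boundary.\<close>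
definition converges_at_infinity :: "('b \<Rightarrow> 'b \<Rightarrow> real) \<Rightarrow> 'b \<Rightarrow> (nat \<Rightarrow> 'b) \<Rightarrow> bool" where
  "converges_at_infinity d w s \<longleftrightarrow>
     (\<forall>K::real. \<exists>N. \<forall>m\<ge>N. \<forall>n\<ge>N. gromov_product d w (s m) (s n) \<ge> K)"

definition equiv_at_infinity :: "('b \<Rightarrow> 'b \<Rightarrow> real) \<Rightarrow> 'b \<Rightarrow> (nat \<Rightarrow> 'b) \<Rightarrow> (nat \<Rightarrow> 'b) \<Rightarrow> bool" where
  "equiv_at_infinity d w s t \<longleftrightarrow>
     (\<forall>K::real. \<exists>N. \<forall>m\<ge>N. \<forall>n\<ge>N. gromov_product d w (s m) (t n) \<ge> K)"

text \<open>Non-elementary action: the limit set (accumulation points in the Gromov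
  boundary of an orbit) has more than two points.\<close>
definition non_elementary :: "('g, 'm) monoid_scheme \<Rightarrow> 'b set \<Rightarrow> ('b \<Rightarrow> 'b \<Rightarrow> real) \<Rightarrow> ('g \<Rightarrow> 'b \<Rightarrow> 'b) \<Rightarrow> bool" where
  "non_elementary G X d \<phi> \<longleftrightarrow>
     (\<exists>w\<in>X. \<exists>s1 s2 s3 :: nat \<Rightarrow> 'b.
        (\<forall>n. s1 n \<in> orbit G \<phi> w \<and> s2 n \<in> orbit G \<phi> w \<and> s3 n \<in> orbit G \<phi> w) \<and>
        converges_at_infinity d w s1 \<and> converges_at_infinity d w s2 \<and> converges_at_infinity d w s3 \<and>
        \<not> equiv_at_infinity d w s1 s2 \<and> \<not> equiv_at_infinity d w s1 s3 \<and>
        \<not> equiv_at_infinity d w s2 s3)"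

definition loxodromic :: "('g, 'm) monoid_scheme \<Rightarrow> 'b set \<Rightarrow> ('b \<Rightarrow> 'b \<Rightarrow> real) \<Rightarrow> ('g \<Rightarrow> 'b \<Rightarrow> 'b) \<Rightarrow> 'g \<Rightarrow> bool" where
  "loxodromic G X d \<phi> g \<longleftrightarrow> g \<in> carrier G \<and>
     (\<exists>x\<in>X. \<exists>L\<ge>1. \<exists>c\<ge>0. \<forall>m n :: int.
        \<bar>real_of_int (m - n)\<bar> / L - c \<le> d (\<phi> (g [^]\<^bsub>G\<^esub> m) x) (\<phi> (g [^]\<^bsub>G\<^esub> n) x) \<and>
        d (\<phi> (g [^]\<^bsub>G\<^esub> m) x) (\<phi> (g [^]\<^bsub>G\<^esub> n) x) \<le> L * \<bar>real_of_int (m - n)\<bar> + c)"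

definition torsion_free :: "('g, 'm) monoid_scheme \<Rightarrow> bool" where
  "torsion_free G \<longleftrightarrow> (\<forall>x\<in>carrier G. \<forall>n::nat. n \<ge> 1 \<longrightarrow> x [^]\<^bsub>G\<^esub> n = \<one>\<^bsub>G\<^esub> \<longrightarrow> x = \<one>\<^bsub>G\<^esub>)"

definition chiral :: "('g, 'm) monoid_scheme \<Rightarrow> 'g \<Rightarrow> bool" where
  "chiral G g \<longleftrightarrow> \<not> (\<exists>n::nat. n \<ge> 1 \<and> (\<exists>h\<in>carrier G.
      h \<otimes>\<^bsub>G\<^esub> (g [^]\<^bsub>G\<^esub> n) \<otimes>\<^bsub>G\<^esub> inv\<^bsub>G\<^esub> h = inv\<^bsub>G\<^esub> (g [^]\<^bsub>G\<^esub> n)))"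

end

theory Submission
  imports Defs "HOL-Real_Asymp.Real_Asymp"
begin

text \<open>Suppose h g^n h^-1 = g^-n. Replacing g^n by a suitable power b, we may assume that
  d(x, b^2 x) - d(x, b x) exceeds 3\<delta>; the four point condition then makes the orbit k \<mapsto> b^k x
  a quasi-geodesic. The square f = h^2 commutes with b, so f^i x is displaced by every b^k exactly
  as much as x is, and hence some translate b^t f^i x lies within a uniform distance of x. The
  elements b^t f^i commute with b and move x by a bounded amount, so by acylindricity there are only
  finitely many of them, and f^p = b^s for some p \<ge> 1. But h commutes with f^p and conjugates b^s
  to its inverse, so torsion-freeness forces b^s = 1, then h = 1 and finally b = 1, which is
  impossible for a loxodromic element.\<close>

locale hyperbolic_space = Metric_space X d
  for X :: "'b set" and d :: "'b \<Rightarrow> 'b \<Rightarrow> real" +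
  fixes \<delta> :: real
  assumes delta_nonneg: "\<delta> \<ge> 0"
    and gromov_product_ge: "\<lbrakk>w \<in> X; x \<in> X; y \<in> X; z \<in> X\<rbrakk> \<Longrightarrow>
      gromov_product d w x z \<ge> min (gromov_product d w x y) (gromov_product d w y z) - \<delta>"

lemma gromov_hyperbolicE:
  assumes "gromov_hyperbolic X d"
  obtains \<delta> where "hyperbolic_space X d \<delta>"
  using assms unfolding gromov_hyperbolic_def hyperbolic_space_def hyperbolic_space_axioms_def
  by blast

context hyperbolic_space
begin

lemma four_point:
  assumes "w \<in> X" "x \<in> X" "y \<in> X" "z \<in> X"
  shows "d w y + d x z \<le> d w z + d x y + 2 * \<delta> \<or> d w y + d x z \<le> d w x + d y z + 2 * \<delta>"
proof -
  have "gromov_product d w x z \<ge> gromov_product d w x y - \<delta> \<or>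
        gromov_product d w x z \<ge> gromov_product d w y z - \<delta>"
    using gromov_product_ge[OF assms] by linarith
  then show ?thesis
    unfolding gromov_product_def by (auto simp: field_simps)
qed

end

locale uniform_chain = hyperbolic_space +
  fixes q and S :: "nat \<Rightarrow> real"
  assumes chain_in_space [simp]: "q i \<in> X"
    and chain_dist: "d (q i) (q (i + k)) = S k"
begin

lemma chain_dist_le: "i \<le> j \<Longrightarrow> d (q i) (q j) = S (j - i)"
  using chain_dist[of i "j - i"] by simp

lemma chain_dist_ge: "i \<le> j \<Longrightarrow> d (q j) (q i) = S (j - i)"
  using chain_dist_le commute by metis

lemma S_0 [simp]: "S 0 = 0"
  using chain_dist[of 0 0] by simp

lemma S_nonneg: "S k \<ge> 0"
  using chain_dist[of 0 k] nonneg by metis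

lemma S_subadditive: "S (k + l) \<le> S k + S l"
  using triangle[of "q 0" "q k" "q (k + l)"] by (simp add: chain_dist_le)

end

text \<open>Progress of more than 3\<delta> in the second step lets the four point condition propagate
  the defect of a single step along the whole chain, which makes it a quasi-geodesic.\<close>

locale quasi_geodesic_chain = uniform_chain +
  assumes progress: "S 2 - S 1 > 3 * \<delta>"
begin

definition defect :: real where
  "defect = 2 * S 1 - S 2 + 4 * \<delta>"

lemma S_2_le: "S 2 \<le> 2 * S 1"
  using S_subadditive[of 1 1] by (simp only: one_add_one mult_2)

lemma defect_nonneg: "defect \<ge> 0"
  using S_2_le delta_nonneg unfolding defect_def by linarith

lemma step_defect_le: "S k + S 1 - S (Suc k) \<le> 2 * S 1 - S 2 + 2 * \<delta>"
proof (induction k)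
  case 0
  then show ?case using S_2_le delta_nonneg by simp
next
  case (Suc k)
  have "S (Suc k) + S 2 \<le> S 1 + S k + 2 * \<delta> \<or> S (Suc k) + S 2 \<le> S 1 + S (Suc (Suc k)) + 2 * \<delta>"
    using four_point[of "q (Suc k)" "q k" "q 0" "q (Suc (Suc k))"]
    by (simp add: chain_dist_le chain_dist_ge numeral_2_eq_2)
  then show ?case
    using Suc.IH progress delta_nonneg by linarith
qed

lemma defect_le: "S i + S j - S (i + j) \<le> defect"
proof (cases "i = 0 \<or> j = 0")
  case True
  then show ?thesis using defect_nonneg by auto
next
  case False
  then obtain i' j' where ij: "i = Suc i'" "j = Suc j'"
    by (metis not0_implies_Suc)
  have around_i: "S i + S 2 \<le> S 1 + S i' + 2 * \<delta> \<or> S i + S 2 \<le> S 1 + S (Suc i) + 2 * \<delta>"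
    using four_point[of "q i" "q i'" "q 0" "q (Suc i)"] ij
    by (simp add: chain_dist_le chain_dist_ge numeral_2_eq_2)
  have beyond_i: "S j + S (Suc i) \<le> S 1 + S (i + j) + 2 * \<delta> \<or> S j + S (Suc i) \<le> S i + S j' + 2 * \<delta>"
    using four_point[of "q i" "q 0" "q (i + j)" "q (Suc i)"] ij
    by (simp add: chain_dist_le chain_dist_ge)
  show ?thesis
    using around_i beyond_i step_defect_le[of i', folded ij(1)] step_defect_le[of j', folded ij(2)]
      progress delta_nonneg
    unfolding defect_def by (elim disjE) linarith+
qed

lemma detour_dichotomy:
  assumes y: "y \<in> X" and j: "j \<le> n"
  shows "S j + d y (q j) - d y (q 0) \<le> defect + 2 * \<delta> \<or>
    d y (q j) + S (n - j) - d y (q n) \<le> defect + 2 * \<delta>"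
proof -
  have "d y (q j) + S n \<le> d y (q n) + S j + 2 * \<delta> \<or> d y (q j) + S n \<le> d y (q 0) + S (n - j) + 2 * \<delta>"
    using four_point[of y "q 0" "q j" "q n"] j y by (simp add: chain_dist_le)
  moreover have "S j + S (n - j) - S n \<le> defect"
    using defect_le[of j "n - j"] j by simp
  ultimately show ?thesis by linarith
qed

lemma near_chain:
  assumes y: "y \<in> X" and almost_between: "d y (q 0) + d y (q (2 * m)) \<le> 2 * S m + 2 * \<delta>"
  shows "\<exists>j. d y (q j) \<le> 3/2 * defect + 3 * \<delta> + S 1"
proof -
  txt \<open>P j says that q j lies almost on the way from q 0 to y. If P (2 * m) fails, y is close
    to q j for the last j with P j.\<close>
  define P where "P j \<longleftrightarrow> S j + d y (q j) - d y (q 0) \<le> defect + 2 * \<delta>" for j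
  have middle: "S m + S m - S (2 * m) \<le> defect"
    using defect_le[of m m] by (simp only: mult_2)
  show ?thesis
  proof (cases "P (2 * m)")
    case True
    then have "d y (q (2 * m)) \<le> 3/2 * defect + 3 * \<delta> + S 1"
      using almost_between middle defect_nonneg S_nonneg[of 1] delta_nonneg
      unfolding P_def by linarith
    then show ?thesis by blast
  next
    case False
    have "P 0" using defect_nonneg delta_nonneg by (simp add: P_def)
    then obtain j where j: "j < 2 * m" "P j" "\<not> P (Suc j)"
      using ex_least_nat_less[of "\<lambda>j. \<not> P j" "2 * m"] False by auto
    have "d y (q (Suc j)) + S (2 * m - Suc j) - d y (q (2 * m)) \<le> defect + 2 * \<delta>"
      using detour_dichotomy[OF y, of "Suc j" "2 * m"] j unfolding P_def by linarith
    moreover have "d y (q j) \<le> d y (q (Suc j)) + S 1"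
      using triangle[of y "q (Suc j)" "q j"] y by (simp add: chain_dist_ge)
    moreover have "S (2 * m - 1) \<le> S j + S (2 * m - Suc j)"
      using S_subadditive[of j "2 * m - Suc j"] j by simp
    moreover have "S (2 * m) \<le> S (2 * m - 1) + S 1"
      using S_subadditive[of "2 * m - 1" 1] j by simp
    ultimately have "d y (q j) \<le> 3/2 * defect + 3 * \<delta> + S 1"
      using j(2) almost_between middle unfolding P_def by linarith
    then show ?thesis by blast
  qed
qed

end

lemma exponential_lower_bound_jump:
  fixes V :: "nat \<Rightarrow> real"
  assumes L: "L > 0" and lower: "\<And>j. 2 ^ j / L - c \<le> V j"
  shows "\<exists>j. V (Suc j) - V j > D"
proof (rule ccontr)
  assume "\<not> ?thesis"
  then have step: "V (Suc j) - V j \<le> D" for j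
    by (meson not_less)
  have linear: "V j \<le> V 0 + D * real j" for j
  proof (induction j)
    case (Suc j)
    have "D * real (Suc j) = D * real j + D"
      by (simp add: algebra_simps)
    with Suc step[of j] show ?case by linarith
  qed simp
  have "eventually (\<lambda>j::nat. L * (V 0 + c) + L * D * real j < 2 ^ j) at_top"
    by real_asymp
  then obtain j :: nat where j: "L * (V 0 + c) + L * D * real j < 2 ^ j"
    by (auto simp: eventually_at_top_linorder)
  have "2 ^ j \<le> L * (V j + c)"
    using lower[of j] L by (simp add: field_simps)
  also have "\<dots> \<le> L * (V 0 + c) + L * D * real j"
    using mult_left_mono[OF linear[of j], of L] L by (simp add: algebra_simps)
  finally show False using j by simp
qed

lemma (in group) conjugation_hom:
  assumes h: "h \<in> carrier G"
  shows "(\<lambda>y. h \<otimes> y \<otimes> inv h) \<in> hom G G"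
proof -
  have cancel: "inv h \<otimes> (h \<otimes> z) = z" if "z \<in> carrier G" for z
    using h that by (metis inv_closed l_inv l_one m_assoc)
  show ?thesis
    unfolding hom_def using h by (auto simp: m_assoc cancel)
qed

lemma (in group) conjugate_int_pow:
  assumes "h \<in> carrier G" "b \<in> carrier G"
  shows "h \<otimes> b [^] (k::int) \<otimes> inv h = (h \<otimes> b \<otimes> inv h) [^] k"
  using hom_int_pow[OF conjugation_hom[OF assms(1)] assms(2) is_group is_group] by simp

lemma (in group) inverting_conjugate_int_pow:
  assumes "h \<in> carrier G" "b \<in> carrier G" "h \<otimes> b \<otimes> inv h = inv b"
  shows "h \<otimes> b [^] (k::int) \<otimes> inv h = inv (b [^] k)"
  using assms by (simp add: conjugate_int_pow int_pow_inv)

lemma (in group) inverting_conjugate_square_commutes: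
  assumes h: "h \<in> carrier G" and b: "b \<in> carrier G" and hb: "h \<otimes> b \<otimes> inv h = inv b"
  shows "(h \<otimes> h) \<otimes> b = b \<otimes> (h \<otimes> h)"
proof -
  have shift: "h \<otimes> y = z \<otimes> h" if "y \<in> carrier G" "z \<in> carrier G" "h \<otimes> y \<otimes> inv h = z" for y z
    using h that by (metis inv_closed l_inv m_assoc m_closed r_one)
  have "h \<otimes> inv b \<otimes> inv h = b"
    using inverting_conjugate_int_pow[OF h b hb, of "-1"] b by (simp add: int_pow_neg)
  then have hb': "h \<otimes> inv b = b \<otimes> h"
    using shift b by simp
  have "(h \<otimes> h) \<otimes> b = h \<otimes> (inv b \<otimes> h)"
    using shift[OF b _ hb] h b by (simp add: m_assoc)
  also have "\<dots> = (b \<otimes> h) \<otimes> h"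
    using hb' h b by (simp add: m_assoc[symmetric])
  finally show ?thesis
    using h b by (simp add: m_assoc)
qed

lemma (in group) pow_eq_if_translates_eq:
  assumes b: "b \<in> carrier G" and f: "f \<in> carrier G"
    and eq: "b [^] (s::int) \<otimes> f [^] (i::nat) = b [^] (t::int) \<otimes> f [^] (p + i)"
  shows "f [^] p = b [^] (- t + s)"
proof -
  have "b [^] s \<otimes> f [^] i = (b [^] t \<otimes> f [^] p) \<otimes> f [^] i"
    using eq b f by (simp add: m_assoc nat_pow_mult)
  then have "b [^] s = b [^] t \<otimes> f [^] p"
    using b f by (simp add: right_cancel)
  then have "f [^] p = inv (b [^] t) \<otimes> b [^] s"
    using b f by (simp add: inv_solve_left)
  also have "\<dots> = b [^] (- t + s)"
    using int_pow_mult[OF b, of "- t" s] b by (simp add: int_pow_neg)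
  finally show ?thesis .
qed

lemma (in group) torsion_free_pow_eq_one:
  "\<lbrakk>torsion_free G; w \<in> carrier G; w [^] (k::nat) = \<one>; k \<ge> 1\<rbrakk> \<Longrightarrow> w = \<one>"
  unfolding torsion_free_def by blast

lemma (in group) torsion_free_inv_eq_self:
  assumes "torsion_free G" "w \<in> carrier G" "inv w = w"
  shows "w = \<one>"
proof -
  have "w [^] (2::nat) = \<one>"
    using assms r_inv[of w] by (simp add: numeral_2_eq_2)
  then show ?thesis
    using torsion_free_pow_eq_one assms by simp
qed

lemma (in group) torsion_free_inverted_by_root_trivial:
  assumes tf: "torsion_free G" and h: "h \<in> carrier G" and b: "b \<in> carrier G"
    and hb: "h \<otimes> b \<otimes> inv h = inv b"
    and p: "p \<ge> 1" and root: "(h \<otimes> h) [^] (p::nat) = b [^] (s::int)"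
  shows "b = \<one>"
proof -
  define w where "w = b [^] s"
  have w: "w \<in> carrier G" unfolding w_def using b by simp
  have "h \<otimes> h = h [^] (2::nat)"
    using h by (simp add: numeral_2_eq_2)
  then have w_pow: "w = h [^] (2 * p)"
    using root h unfolding w_def by (simp add: nat_pow_pow)
  have "h \<otimes> w = w \<otimes> h"
    unfolding w_pow using h by (simp add: nat_pow_Suc2[symmetric])
  then have "h \<otimes> w \<otimes> inv h = w"
    using h w by (simp add: m_assoc)
  moreover have "h \<otimes> w \<otimes> inv h = inv w"
    unfolding w_def by (rule inverting_conjugate_int_pow[OF h b hb])
  ultimately have "w = \<one>"
    using torsion_free_inv_eq_self[OF tf w] by simp
  then have "h \<otimes> h = \<one>"
    using root torsion_free_pow_eq_one[OF tf _ _ p] h unfolding w_def by simp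
  then have "h = \<one>"
    using torsion_free_pow_eq_one[OF tf h, of 2] h by (simp add: numeral_2_eq_2)
  then show ?thesis
    using hb torsion_free_inv_eq_self[OF tf b] b by simp
qed

locale isometric_group_action = group G + group_action G X \<phi>
  for G (structure) and X and \<phi> +
  fixes d :: "_ \<Rightarrow> _ \<Rightarrow> real"
  assumes isometric: "\<lbrakk>a \<in> carrier G; x \<in> X; y \<in> X\<rbrakk> \<Longrightarrow> d (\<phi> a x) (\<phi> a y) = d x y"

lemma isometric_group_actionI:
  "group G \<Longrightarrow> isometric_action G X d \<phi> \<Longrightarrow> isometric_group_action G X \<phi> d"
  unfolding isometric_action_def isometric_group_action_def isometric_group_action_axioms_def
  by blast

context isometric_group_action
begin

lemma act_one [simp]: "x \<in> X \<Longrightarrow> \<phi> \<one> x = x"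
  using id_eq_one by (metis restrict_apply')

lemma act_closed [simp]: "a \<in> carrier G \<Longrightarrow> x \<in> X \<Longrightarrow> \<phi> a x \<in> X"
  using element_image by blast

lemma act_mult: "a \<in> carrier G \<Longrightarrow> b \<in> carrier G \<Longrightarrow> x \<in> X \<Longrightarrow> \<phi> (a \<otimes> b) x = \<phi> a (\<phi> b x)"
  using composition_rule by blast

lemma displacement_commuting:
  assumes "a \<in> carrier G" "e \<in> carrier G" "e \<otimes> a = a \<otimes> e" "x \<in> X"
  shows "d (\<phi> a x) (\<phi> e (\<phi> a x)) = d x (\<phi> e x)"
proof -
  have "\<phi> e (\<phi> a x) = \<phi> a (\<phi> e x)"
    using assms by (metis act_mult)
  then show ?thesis
    using assms by (simp add: isometric)
qed

definition unbounded_orbit where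
  "unbounded_orbit b x \<longleftrightarrow> (\<forall>B. \<exists>k::nat. B \<le> d x (\<phi> (b [^] k) x))"

lemma finite_commuting_bounded_displacement:
  assumes acyl: "acylindrical G X d \<phi>" and b: "b \<in> carrier G" and x: "x \<in> X"
    and unbounded: "unbounded_orbit b x"
  shows "finite {e \<in> carrier G. e \<otimes> b = b \<otimes> e \<and> d x (\<phi> e x) \<le> r}"
proof -
  obtain R :: nat where R: "\<And>y z. \<lbrakk>y \<in> X; z \<in> X; real R \<le> d y z\<rbrakk> \<Longrightarrow>
      finite {e \<in> carrier G. max (d y (\<phi> e y)) (d z (\<phi> e z)) \<le> real (nat \<lceil>r\<rceil>)}"
    using acyl unfolding acylindrical_def Let_def by meson
  obtain M :: nat where M: "real R \<le> d x (\<phi> (b [^] M) x)"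
    using unbounded unfolding unbounded_orbit_def by blast
  define y where "y = \<phi> (b [^] M) x"
  have "{e \<in> carrier G. e \<otimes> b = b \<otimes> e \<and> d x (\<phi> e x) \<le> r}
      \<subseteq> {e \<in> carrier G. max (d x (\<phi> e x)) (d y (\<phi> e y)) \<le> real (nat \<lceil>r\<rceil>)}"
  proof safe
    fix e assume e: "e \<in> carrier G" "e \<otimes> b = b \<otimes> e" "d x (\<phi> e x) \<le> r"
    have "e \<otimes> b [^] M = b [^] M \<otimes> e"
      using group_commutes_pow[of b e M] e b by simp
    then have "d y (\<phi> e y) = d x (\<phi> e x)"
      unfolding y_def using displacement_commuting e b x by simp
    then show "max (d x (\<phi> e x)) (d y (\<phi> e y)) \<le> real (nat \<lceil>r\<rceil>)"
      using e real_nat_ceiling_ge[of r] by simp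
  qed
  moreover have "finite {e \<in> carrier G. max (d x (\<phi> e x)) (d y (\<phi> e y)) \<le> real (nat \<lceil>r\<rceil>)}"
    using R x b M unfolding y_def by simp
  ultimately show ?thesis
    by (rule finite_subset)
qed

lemma loxodromic_pow:
  assumes lox: "loxodromic G X d \<phi> g" and n: "n \<ge> 1"
  shows "loxodromic G X d \<phi> (g [^] (n::nat))"
proof -
  obtain x L c where g: "g \<in> carrier G" and x: "x \<in> X" and L: "L \<ge> 1" and c: "c \<ge> 0"
    and qi: "\<And>m k::int. \<bar>real_of_int (m - k)\<bar> / L - c \<le> d (\<phi> (g [^] m) x) (\<phi> (g [^] k) x) \<and>
        d (\<phi> (g [^] m) x) (\<phi> (g [^] k) x) \<le> L * \<bar>real_of_int (m - k)\<bar> + c"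
    using lox unfolding loxodromic_def by blast
  have pow: "(g [^] n) [^] m = g [^] (int n * m)" for m :: int
    using g by (simp add: int_pow_int[symmetric] int_pow_pow)
  have qi_pow: "\<bar>real_of_int (m - k)\<bar> / (L * n) - c \<le> d (\<phi> ((g [^] n) [^] m) x) (\<phi> ((g [^] n) [^] k) x) \<and>
      d (\<phi> ((g [^] n) [^] m) x) (\<phi> ((g [^] n) [^] k) x) \<le> (L * n) * \<bar>real_of_int (m - k)\<bar> + c"
    for m k :: int
  proof -
    define a where "a = \<bar>real_of_int (m - k)\<bar>"
    have scale: "\<bar>real_of_int (int n * m - int n * k)\<bar> = real n * a"
      unfolding a_def by (simp flip: right_diff_distrib add: abs_mult)
    have "a / (L * n) \<le> a / L"
      using L n unfolding a_def by (intro divide_left_mono) auto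
    also have "\<dots> \<le> real n * a / L"
      using L mult_right_mono[of 1 "real n" a] n unfolding a_def by (intro divide_right_mono) auto
    finally show ?thesis
      using qi[of "int n * m" "int n * k"] unfolding pow scale a_def by (simp add: algebra_simps)
  qed
  have "L * real n \<ge> 1"
    using mult_mono[of 1 L 1 "real n"] L n by simp
  then show ?thesis
    unfolding loxodromic_def using g x c qi_pow by blast
qed

lemma unbounded_orbit_pow_if_escapes:
  assumes a: "a \<in> carrier G" and L: "L > 0"
    and escape: "\<And>j::nat. real j / L - c \<le> d x (\<phi> (a [^] j) x)" and k: "(k::nat) \<ge> 1"
  shows "unbounded_orbit (a [^] k) x"
  unfolding unbounded_orbit_def
proof
  fix B
  obtain m :: nat where "L * (B + c) \<le> real m"
    using real_arch_simple by blast
  then have "B \<le> real m / L - c"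
    using L by (simp add: field_simps)
  also have "\<dots> \<le> real (k * m) / L - c"
    using L mult_right_mono[of 1 "real k" "real m"] k by (simp add: divide_right_mono)
  also have "\<dots> \<le> d x (\<phi> ((a [^] k) [^] m) x)"
    using escape[of "k * m"] a by (simp add: nat_pow_pow)
  finally show "\<exists>m::nat. B \<le> d x (\<phi> ((a [^] k) [^] m) x)" by blast
qed

lemma loxodromic_power_with_progress:
  assumes lox: "loxodromic G X d \<phi> a"
  obtains x k where "x \<in> X" "unbounded_orbit (a [^] (k::nat)) x"
    "d x (\<phi> ((a [^] k) [^] (2::nat)) x) - d x (\<phi> (a [^] k) x) > D"
proof -
  obtain x L c where a: "a \<in> carrier G" and x: "x \<in> X" and L: "L \<ge> 1"
    and lower: "\<And>m k::int. \<bar>real_of_int (m - k)\<bar> / L - c \<le> d (\<phi> (a [^] m) x) (\<phi> (a [^] k) x)"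
    using lox unfolding loxodromic_def by blast
  have escape: "real j / L - c \<le> d x (\<phi> (a [^] j) x)" for j :: nat
    using lower[of 0 "int j"] a x by (simp add: int_pow_int)
  have "\<exists>j. d x (\<phi> (a [^] ((2::nat) ^ Suc j)) x) - d x (\<phi> (a [^] ((2::nat) ^ j)) x) > D"
  proof (rule exponential_lower_bound_jump[where V = "\<lambda>j. d x (\<phi> (a [^] ((2::nat) ^ j)) x)"])
    show "L > 0" using L by simp
    show "2 ^ j / L - c \<le> d x (\<phi> (a [^] ((2::nat) ^ j)) x)" for j
      using escape[of "2 ^ j"] by simp
  qed
  then obtain j where j: "d x (\<phi> (a [^] ((2::nat) ^ Suc j)) x) - d x (\<phi> (a [^] ((2::nat) ^ j)) x) > D"
    by blast
  define k where "k = (2::nat) ^ j"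
  have "(a [^] k) [^] (2::nat) = a [^] ((2::nat) ^ Suc j)"
    using a by (simp add: k_def nat_pow_pow mult.commute)
  moreover have "k \<ge> 1"
    unfolding k_def by simp
  then have "unbounded_orbit (a [^] k) x"
    using unbounded_orbit_pow_if_escapes[OF a _ escape] L by simp
  ultimately show thesis
    using that x j unfolding k_def by simp
qed

end

locale hyperbolic_action = isometric_group_action G X \<phi> d + hyperbolic_space X d \<delta>
  for G (structure) and X \<phi> d \<delta>
begin

lemma translate_almost_between:
  assumes b: "b \<in> carrier G" and x: "x \<in> X" and z: "z \<in> X"
    and same_displacement: "d z (\<phi> (b [^] (m::nat)) z) = d x (\<phi> (b [^] m) x)"
    and close: "d z x \<le> d x (\<phi> (b [^] m) x)"
  shows "d (\<phi> (b [^] m) z) x + d (\<phi> (b [^] m) z) (\<phi> (b [^] (2 * m)) x)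
    \<le> 2 * d x (\<phi> (b [^] m) x) + 2 * \<delta>"
proof -
  define y where "y = \<phi> (b [^] m) z"
  define x' where "x' = \<phi> (b [^] m) x"
  have "d y x' = d z x"
    unfolding y_def x'_def using b x z by (simp add: isometric)
  moreover have "d y z = d x x'"
    using same_displacement commute unfolding y_def x'_def by metis
  moreover have "d y (\<phi> (b [^] (2 * m)) x) = d z x'"
    unfolding y_def x'_def using b x z by (simp add: mult_2 nat_pow_mult[symmetric] act_mult isometric)
  moreover have "y \<in> X" "x' \<in> X"
    unfolding y_def x'_def using b x z by simp_all
  then have "d y x + d z x' \<le> d y x' + d z x + 2 * \<delta> \<or> d y x + d z x' \<le> d y z + d x x' + 2 * \<delta>"
    using four_point x z by blast
  ultimately show ?thesis
    using close unfolding y_def[symmetric] x'_def[symmetric] by linarith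
qed

lemma orbit_quasi_geodesic_chain:
  assumes b: "b \<in> carrier G" and x: "x \<in> X"
    and progress: "d x (\<phi> (b [^] (2::nat)) x) - d x (\<phi> b x) > 3 * \<delta>"
  shows "quasi_geodesic_chain X d \<delta> (\<lambda>k. \<phi> (b [^] k) x) (\<lambda>k. d x (\<phi> (b [^] k) x))"
proof unfold_locales
  show "\<phi> (b [^] i) x \<in> X" for i :: nat
    using b x by simp
  show "d (\<phi> (b [^] i) x) (\<phi> (b [^] (i + k)) x) = d x (\<phi> (b [^] k) x)" for i k :: nat
    using b x by (simp add: act_mult nat_pow_mult[symmetric] isometric)
  show "d x (\<phi> (b [^] (2::nat)) x) - d x (\<phi> (b [^] (1::nat)) x) > 3 * \<delta>"
    using progress b by simp
qed

lemma commuting_translate_near_basepoint: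
  assumes b: "b \<in> carrier G" and x: "x \<in> X" and unbounded: "unbounded_orbit b x"
    and progress: "d x (\<phi> (b [^] (2::nat)) x) - d x (\<phi> b x) > 3 * \<delta>"
  obtains C where "\<And>f. \<lbrakk>f \<in> carrier G; f \<otimes> b = b \<otimes> f\<rbrakk> \<Longrightarrow> \<exists>t::int. d x (\<phi> (b [^] t \<otimes> f) x) \<le> C"
proof -
  define q where "q k = \<phi> (b [^] k) x" for k :: nat
  define S where "S k = d x (q k)" for k
  interpret quasi_geodesic_chain X d \<delta> q S
    using orbit_quasi_geodesic_chain[OF b x progress] unfolding q_def S_def .
  show thesis
  proof (rule that[of "3/2 * defect + 3 * \<delta> + S 1"])
    fix f assume f: "f \<in> carrier G" and fb: "f \<otimes> b = b \<otimes> f"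
    define z where "z = \<phi> f x"
    have z: "z \<in> X" unfolding z_def using f x by simp
    have z_displacement: "d z (\<phi> (b [^] k) z) = S k" for k :: nat
      unfolding z_def S_def q_def
      using displacement_commuting[of f "b [^] k" x] group_commutes_pow[of b f k] f fb b x by simp
    obtain m :: nat where m: "d z x \<le> S m"
      using unbounded unfolding unbounded_orbit_def S_def q_def by blast
    define y where "y = \<phi> (b [^] m) z"
    have y: "y \<in> X" unfolding y_def using b z by simp
    have "d y (q 0) + d y (q (2 * m)) \<le> 2 * S m + 2 * \<delta>"
      using translate_almost_between[OF b x z] z_displacement[of m] m x
      unfolding y_def S_def q_def by simp
    then obtain j where j: "d y (q j) \<le> 3/2 * defect + 3 * \<delta> + S 1"
      using near_chain y by blast
    have "\<phi> (b [^] (int m - int j) \<otimes> f) x = \<phi> (b [^] (int m - int j)) z"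
      unfolding z_def using b f x by (simp add: act_mult)
    moreover have "\<phi> (b [^] j) (\<phi> (b [^] (int m - int j)) z) = y"
      using int_pow_mult[OF b, of "int j" "int m - int j"] b z
      unfolding y_def by (simp add: act_mult[symmetric] int_pow_int)
    ultimately have "d x (\<phi> (b [^] (int m - int j) \<otimes> f) x) = d (q j) y"
      using isometric[of "b [^] j" x "\<phi> (b [^] (int m - int j)) z"] b x z unfolding q_def by simp
    then show "\<exists>t::int. d x (\<phi> (b [^] t \<otimes> f) x) \<le> 3/2 * defect + 3 * \<delta> + S 1"
      using j commute by metis
  qed
qed

lemma commuting_power_in_powers:
  assumes acyl: "acylindrical G X d \<phi>" and b: "b \<in> carrier G" and x: "x \<in> X"
    and unbounded: "unbounded_orbit b x"
    and progress: "d x (\<phi> (b [^] (2::nat)) x) - d x (\<phi> b x) > 3 * \<delta>"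
    and f: "f \<in> carrier G" and fb: "f \<otimes> b = b \<otimes> f"
  obtains p :: nat and s :: int where "p \<ge> 1" "f [^] p = b [^] s"
proof -
  obtain C where near: "\<And>f. \<lbrakk>f \<in> carrier G; f \<otimes> b = b \<otimes> f\<rbrakk> \<Longrightarrow> \<exists>t::int. d x (\<phi> (b [^] t \<otimes> f) x) \<le> C"
    using commuting_translate_near_basepoint[OF b x unbounded progress] by blast
  have "\<forall>i::nat. \<exists>t::int. d x (\<phi> (b [^] t \<otimes> f [^] i) x) \<le> C"
    using near group_commutes_pow[OF fb f b] f by simp
  from choice[OF this] obtain T :: "nat \<Rightarrow> int" where T: "\<And>i::nat. d x (\<phi> (b [^] T i \<otimes> f [^] i) x) \<le> C"
    by blast
  define E where "E i = b [^] T i \<otimes> f [^] i" for i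
  have "E i \<otimes> b = b \<otimes> E i" for i
  proof -
    have "b [^] T i \<otimes> b = b \<otimes> b [^] T i"
      using int_pow_mult[OF b, of "T i" 1] int_pow_mult[OF b, of 1 "T i"] b by (simp add: add.commute)
    then show ?thesis
      unfolding E_def using group_commutes_pow[OF fb f b] f b by (metis m_assoc int_pow_closed nat_pow_closed)
  qed
  then have "range E \<subseteq> {e \<in> carrier G. e \<otimes> b = b \<otimes> e \<and> d x (\<phi> e x) \<le> C}"
    using T b f unfolding E_def by auto
  then have "finite (range E)"
    using finite_commuting_bounded_displacement[OF acyl b x unbounded] by (rule finite_subset)
  then have "\<not> inj E"
    using finite_imageD by blast
  then obtain i i' where "i < i'" "E i = E i'"
    unfolding inj_def by (metis linorder_neqE_nat)
  then have "f [^] (i' - i) = b [^] (- T i' + T i)"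
    using pow_eq_if_translates_eq[OF b f, of "T i" i "T i'" "i' - i"] by (simp add: E_def)
  moreover have "i' - i \<ge> 1"
    using \<open>i < i'\<close> by simp
  ultimately show thesis
    using that by blast
qed

lemma loxodromic_chiral:
  assumes tf: "torsion_free G" and acyl: "acylindrical G X d \<phi>" and lox: "loxodromic G X d \<phi> g"
  shows "chiral G g"
  unfolding chiral_def
proof (intro notI, elim exE conjE bexE)
  fix n :: nat and h assume n: "n \<ge> 1" and h: "h \<in> carrier G" and hg: "h \<otimes> g [^] n \<otimes> inv h = inv (g [^] n)"
  have g: "g \<in> carrier G"
    using lox unfolding loxodromic_def by blast
  obtain x and k :: nat where x: "x \<in> X" and unbounded: "unbounded_orbit ((g [^] n) [^] k) x"
    and progress: "d x (\<phi> (((g [^] n) [^] k) [^] (2::nat)) x) - d x (\<phi> ((g [^] n) [^] k) x) > 3 * \<delta>"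
    using loxodromic_power_with_progress[OF loxodromic_pow[OF lox n]] by blast
  define b where "b = (g [^] n) [^] k"
  have b: "b \<in> carrier G"
    unfolding b_def using g by simp
  have hb: "h \<otimes> b \<otimes> inv h = inv b"
    using inverting_conjugate_int_pow[OF h _ hg, of "int k"] g unfolding b_def by (simp add: int_pow_int)
  obtain p :: nat and s :: int where "p \<ge> 1" "(h \<otimes> h) [^] p = b [^] s"
    using commuting_power_in_powers[OF acyl b x unbounded[folded b_def] progress[folded b_def]]
      inverting_conjugate_square_commutes[OF h b hb] h by blast
  then have "b = \<one>"
    using torsion_free_inverted_by_root_trivial[OF tf h b hb] by blast
  then show False
    using unbounded x unfolding b_def[symmetric] unbounded_orbit_def
    by (metis act_one mdist_zero nat_pow_one not_one_le_zero)
qed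

end

theorem lemma2p8:
  fixes G :: "('g, 'm) monoid_scheme"
    and X :: "'b set" and d :: "'b \<Rightarrow> 'b \<Rightarrow> real" and \<phi> :: "'g \<Rightarrow> 'b \<Rightarrow> 'b"
    and g :: 'g
  assumes "group G"
    and "torsion_free G"
    and "gromov_hyperbolic X d"
    and "isometric_action G X d \<phi>"
    and "acylindrical G X d \<phi>"
    and "non_elementary G X d \<phi>"
    and "loxodromic G X d \<phi> g"
  shows "chiral G g"
proof -
  obtain \<delta> where "hyperbolic_space X d \<delta>"
    using assms(3) by (rule gromov_hyperbolicE)
  then interpret hyperbolic_action G X \<phi> d \<delta>
    using isometric_group_actionI[OF assms(1,4)] by (simp add: hyperbolic_action_def)
  show ?thesis
    using loxodromic_chiral assms(2,5,7) by blast
qed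

end
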